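(* Let $P,Q\in\Gamma_n$ and $0<r\le R$ with $r\le p_i/q_i\le R$ for all $i$. Let $s,t\in\mathbb{R}$ with $0\le s\le4$. If $t\le-1$ and $s+t\le1$, then $$\Big(\frac{r+1}{2r}\Big)^{s-3}\frac{(4-s)r+s}{4r^{t+2}}\Phi_t(P\|Q)\le\zeta_s(Q\|P)\le\Big(\frac{R+1}{2R}\Big)^{s-3}\frac{(4-s)R+s}{4R^{t+2}}\Phi_t(P\|Q).$$ If $t\ge-1$ and $s+t\ge2$, then $$\Big(\frac{R+1}{2R}\Big)^{s-3}\frac{(4-s)R+s}{4R^{t+2}}\Phi_t(P\|Q)\le\zeta_s(Q\|P)\le\Big(\frac{r+1}{2r}\Big)^{s-3}\frac{(4-s)r+s}{4r^{t+2}}\Phi_t(P\|Q).$$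
   Context: $\Gamma_n=\{P=(p_1,\dots,p_n): p_i>0,\ \sum_i p_i=1\}$, $n\ge2$. For $P,Q\in\Gamma_n$ and $s\in\mathbb{R}$: $\Phi_s(P\|Q)=[s(s-1)]^{-1}\big[\sum_i p_i^s q_i^{1-s}-1\big]$ for $s\ne0,1$; $\Phi_0(P\|Q)=\sum_i q_i\ln(q_i/p_i)$; $\Phi_1(P\|Q)=\sum_i p_i\ln(p_i/q_i)$. $\zeta_s(Q\|P)=(s-1)^{-1}\sum_i(q_i-p_i)\big(\frac{p_i+q_i}{2p_i}\big)^{s-1}$ for $s\ne1$; $\zeta_1(Q\|P)=\sum_i(q_i-p_i)\ln\frac{p_i+q_i}{2p_i}$. *)

theory Defs
  imports Complex_Main
begin

definition Gamma :: "nat \<Rightarrow> (nat \<Rightarrow> real) set" where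
  "Gamma n = {p. (\<forall>i<n. p i > 0) \<and> (\<Sum>i<n. p i) = 1}"

definition Phi :: "nat \<Rightarrow> real \<Rightarrow> (nat \<Rightarrow> real) \<Rightarrow> (nat \<Rightarrow> real) \<Rightarrow> real" where
  "Phi n s p q =
    (if s = 0 then (\<Sum>i<n. q i * ln (q i / p i))
     else if s = 1 then (\<Sum>i<n. p i * ln (p i / q i))
     else ((\<Sum>i<n. p i powr s * q i powr (1 - s)) - 1) / (s * (s - 1)))"

definition zeta :: "nat \<Rightarrow> real \<Rightarrow> (nat \<Rightarrow> real) \<Rightarrow> (nat \<Rightarrow> real) \<Rightarrow> real" where
  "zeta n s q p =
    (if s = 1 then (\<Sum>i<n. (q i - p i) * ln ((p i + q i) / (2 * p i)))
     else (\<Sum>i<n. (q i - p i) * ((p i + q i) / (2 * p i)) powr (s - 1)) / (s - 1))"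

end

theory Submission
  imports Defs "HOL-Analysis.Convex"
begin

(* Both divergences are Csiszar sums  sum_i q_i f(x_i)  over the ratios x_i = p_i / q_i, whose
   q-weighted mean is 1, with generators f vanishing at 1: Phi_gen t for Phi_t and zeta_gen s for
   zeta_s.  Their second derivatives are x^(t-2) and h(x) x^(t-2), where h = curv_ratio s t is the
   coefficient in the statement.  If m <= h <= M on [r, R], then zeta_gen s - m Phi_gen t and
   M Phi_gen t - zeta_gen s are convex on [r, R] and vanish at 1, so their Csiszar sums are
   nonnegative (compare with the tangent at 1).  Finally h is monotone: its logarithmic derivative
   has the sign of the quadratic curv_ratio_num s t, which is nonnegative if t <= -1, s + t <= 1
   and nonpositive if t >= -1, s + t >= 2. *)

lemma weighted_sum_convex_nonneg:
  fixes A A' A'' :: "real \<Rightarrow> real" and x q :: "'i \<Rightarrow> real"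
  assumes "convex C" "1 \<in> C"
    and "\<And>y. y \<in> C \<Longrightarrow> (A has_real_derivative A' y) (at y)"
    and "\<And>y. y \<in> C \<Longrightarrow> (A' has_real_derivative A'' y) (at y)"
    and "\<And>y. y \<in> C \<Longrightarrow> 0 \<le> A'' y"
    and "A 1 = 0"
    and "\<And>i. i \<in> I \<Longrightarrow> x i \<in> C"
    and q: "\<And>i. i \<in> I \<Longrightarrow> 0 \<le> q i"
    and mean: "(\<Sum>i\<in>I. q i * x i) = (\<Sum>i\<in>I. q i)"
  shows "0 \<le> (\<Sum>i\<in>I. q i * A (x i))"
proof -
  have tangent: "A' 1 * (x i - 1) \<le> A (x i)" if "i \<in> I" for i
    using f''_imp_f'[of C A A' A'' 1 "x i"] assms that by simp
  have "0 = A' 1 * ((\<Sum>i\<in>I. q i * x i) - (\<Sum>i\<in>I. q i))"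
    using mean by simp
  also have "\<dots> = (\<Sum>i\<in>I. q i * (A' 1 * (x i - 1)))"
    by (simp add: sum_distrib_left sum_subtractf algebra_simps)
  also have "\<dots> \<le> (\<Sum>i\<in>I. q i * A (x i))"
    using tangent q by (intro sum_mono mult_left_mono) auto
  finally show ?thesis .
qed

lemma weighted_sum_mono_second_deriv:
  fixes A A' A'' B B' B'' :: "real \<Rightarrow> real" and x q :: "'i \<Rightarrow> real"
  assumes "convex C" "1 \<in> C"
    and "\<And>y. y \<in> C \<Longrightarrow> (A has_real_derivative A' y) (at y)"
    and "\<And>y. y \<in> C \<Longrightarrow> (A' has_real_derivative A'' y) (at y)"
    and "\<And>y. y \<in> C \<Longrightarrow> (B has_real_derivative B' y) (at y)"
    and "\<And>y. y \<in> C \<Longrightarrow> (B' has_real_derivative B'' y) (at y)"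
    and "\<And>y. y \<in> C \<Longrightarrow> A'' y \<le> B'' y"
    and "A 1 = B 1"
    and "\<And>i. i \<in> I \<Longrightarrow> x i \<in> C"
    and "\<And>i. i \<in> I \<Longrightarrow> 0 \<le> q i"
    and "(\<Sum>i\<in>I. q i * x i) = (\<Sum>i\<in>I. q i)"
  shows "(\<Sum>i\<in>I. q i * A (x i)) \<le> (\<Sum>i\<in>I. q i * B (x i))"
proof -
  have "0 \<le> (\<Sum>i\<in>I. q i * (B (x i) - A (x i)))"
    by (rule weighted_sum_convex_nonneg[where A = "\<lambda>y. B y - A y"
          and A' = "\<lambda>y. B' y - A' y" and A'' = "\<lambda>y. B'' y - A'' y"])
       (use assms in \<open>auto intro: DERIV_diff\<close>)
  then show ?thesis
    by (simp add: right_diff_distrib sum_subtractf)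
qed

definition Phi_gen :: "real \<Rightarrow> real \<Rightarrow> real" where
  "Phi_gen t x =
    (if t = 0 then x - 1 - ln x
     else if t = 1 then x * ln x - x + 1
     else (x powr t - 1 - t * (x - 1)) / (t * (t - 1)))"

definition Phi_gen' :: "real \<Rightarrow> real \<Rightarrow> real" where
  "Phi_gen' t x =
    (if t = 0 then 1 - 1 / x
     else if t = 1 then ln x
     else (x powr (t - 1) - 1) / (t - 1))"

definition zeta_gen :: "real \<Rightarrow> real \<Rightarrow> real" where
  "zeta_gen s x =
    (if s = 1 then (1 - x) * ln ((x + 1) / (2 * x))
     else (1 - x) * ((x + 1) / (2 * x)) powr (s - 1) / (s - 1))"

definition zeta_gen' :: "real \<Rightarrow> real \<Rightarrow> real" where
  "zeta_gen' s x =
    (if s = 1 then - ln ((x + 1) / (2 * x))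
     else - (((x + 1) / (2 * x)) powr (s - 1)) / (s - 1))
    + (x - 1) / (2 * x\<^sup>2) * ((x + 1) / (2 * x)) powr (s - 2)"

definition zeta_gen'' :: "real \<Rightarrow> real \<Rightarrow> real" where
  "zeta_gen'' s x = ((x + 1) / (2 * x)) powr (s - 3) * ((4 - s) * x + s) / (4 * x ^ 4)"

lemma Phi_gen_one [simp]: "Phi_gen t 1 = 0"
  by (simp add: Phi_gen_def)

lemma Phi_gen_deriv:
  assumes "0 < x"
  shows "(Phi_gen t has_real_derivative Phi_gen' t x) (at x)"
proof -
  consider "t = 0" | "t = 1" | "t \<noteq> 0" "t \<noteq> 1" by blast
  then show ?thesis
  proof cases
    case 3
    have "((\<lambda>x. (x powr t - 1 - t * (x - 1)) / (t * (t - 1)))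
        has_real_derivative Phi_gen' t x) (at x)"
      using assms 3
      by (auto intro!: derivative_eq_intros simp: Phi_gen'_def divide_simps)
         (simp add: algebra_simps)
    then show ?thesis using 3 by (simp add: Phi_gen_def[abs_def])
  qed (use assms in \<open>auto intro!: derivative_eq_intros
         simp: Phi_gen_def[abs_def] Phi_gen'_def field_simps\<close>)
qed

lemma Phi_gen'_deriv:
  assumes "0 < x"
  shows "(Phi_gen' t has_real_derivative x powr (t - 2)) (at x)"
proof -
  consider "t = 0" | "t = 1" | "t \<noteq> 0" "t \<noteq> 1" by blast
  then show ?thesis
  proof cases
    case 3
    have "((\<lambda>x. (x powr (t - 1) - 1) / (t - 1)) has_real_derivative x powr (t - 2)) (at x)"
      using assms 3 by (auto intro!: derivative_eq_intros)
    then show ?thesis using 3 by (simp add: Phi_gen'_def[abs_def])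
  qed (use assms in \<open>auto intro!: derivative_eq_intros
         simp: Phi_gen'_def[abs_def] powr_minus powr_numeral power2_eq_square field_simps\<close>)
qed

lemma zeta_gen_one [simp]: "zeta_gen s 1 = 0"
  by (simp add: zeta_gen_def)

lemma zeta_gen_deriv:
  assumes "0 < x"
  shows "(zeta_gen s has_real_derivative zeta_gen' s x) (at x)"
proof (cases "s = 1")
  case True
  have "((\<lambda>x. (1 - x) * ln ((x + 1) / (2 * x))) has_real_derivative zeta_gen' s x) (at x)"
    using assms True
    by (auto intro!: derivative_eq_intros simp: zeta_gen'_def powr_minus divide_simps)
       (simp add: algebra_simps power2_eq_square)
  then show ?thesis using True by (simp add: zeta_gen_def[abs_def])
next
  case False
  have "((\<lambda>x. (1 - x) * ((x + 1) / (2 * x)) powr (s - 1) / (s - 1))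
      has_real_derivative zeta_gen' s x) (at x)"
    using assms False
    by (auto intro!: derivative_eq_intros simp: zeta_gen'_def divide_simps)
       (simp add: algebra_simps power2_eq_square)
  then show ?thesis using False by (simp add: zeta_gen_def[abs_def])
qed

lemma zeta_gen'_deriv:
  assumes "0 < x"
  shows "(zeta_gen' s has_real_derivative zeta_gen'' s x) (at x)"
proof -
  define u where "u = (x + 1) / (2 * x)"
  have u_pos: "0 < u" using assms by (simp add: u_def)
  have first: "((\<lambda>x. if s = 1 then - ln ((x + 1) / (2 * x))
                  else - (((x + 1) / (2 * x)) powr (s - 1)) / (s - 1))
               has_real_derivative u powr (s - 2) / (2 * x\<^sup>2)) (at x)"
    using assms u_pos
    by (cases "s = 1"; auto intro!: derivative_eq_intros simp flip: u_def)
       (simp_all add: u_def powr_minus divide_simps power2_eq_square)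
  have second: "((\<lambda>x. (x - 1) / (2 * x\<^sup>2) * ((x + 1) / (2 * x)) powr (s - 2))
               has_real_derivative
                 (2 - x) / (2 * x ^ 3) * u powr (s - 2)
                 - (s - 2) * (x - 1) / (4 * x ^ 4) * u powr (s - 3))
               (at x)"
    using assms u_pos
    by (auto intro!: derivative_eq_intros simp flip: u_def)
       (simp add: divide_simps power2_eq_square power3_eq_cube power4_eq_xxxx algebra_simps)
  define a where "a = u powr (s - 3)"
  have u_shift: "u powr (s - 2) = u * a"
    using u_pos powr_add[of u 1 "s - 3"] by (simp add: a_def)
  have "u powr (s - 2) / (2 * x\<^sup>2)
      + ((2 - x) / (2 * x ^ 3) * u powr (s - 2)
         - (s - 2) * (x - 1) / (4 * x ^ 4) * u powr (s - 3))
      = a * ((4 - s) * x + s) / (4 * x ^ 4)"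
    using assms
    by (simp only: u_shift flip: a_def) (simp add: u_def field_simps eval_nat_numeral)
  also have "\<dots> = zeta_gen'' s x"
    by (simp add: zeta_gen''_def a_def u_def)
  finally show ?thesis
    using DERIV_add[OF first second] by (simp add: zeta_gen'_def[abs_def])
qed

definition curv_ratio :: "real \<Rightarrow> real \<Rightarrow> real \<Rightarrow> real" where
  "curv_ratio s t y =
    ((y + 1) / (2 * y)) powr (s - 3) * (((4 - s) * y + s) / (4 * y powr (t + 2)))"

lemma zeta_gen''_eq_curv_ratio:
  assumes "0 < y"
  shows "zeta_gen'' s y = curv_ratio s t y * y powr (t - 2)"
proof -
  have "y powr (t + 2) = y powr (t - 2) * y ^ 4"
    using assms powr_add[of y "t - 2" 4] by (simp add: powr_numeral add.commute)
  then show ?thesis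
    using assms by (simp add: zeta_gen''_def curv_ratio_def field_simps)
qed

definition curv_ratio_num :: "real \<Rightarrow> real \<Rightarrow> real \<Rightarrow> real" where
  "curv_ratio_num s t y =
    - (4 - s) * (t + 1) * y\<^sup>2 + ((4 - s)\<^sup>2 - 4 * t - 8) * y - s * (s + t - 1)"

lemma curv_ratio_deriv:
  assumes "0 < y" "0 < (4 - s) * y + s"
  shows "(curv_ratio s t has_real_derivative
           curv_ratio s t y * curv_ratio_num s t y / (y * (y + 1) * ((4 - s) * y + s))) (at y)"
proof -
  define u where "u = (y + 1) / (2 * y)"
  define a where "a = u powr (s - 3)"
  define b where "b = y powr (t + 2)"
  have u_pos: "0 < u" and b_pos: "0 < b"
    using assms(1) by (simp_all add: u_def b_def)
  have u_shift: "u powr (s - 4) = a / u"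
    using u_pos powr_diff[of u "s - 3" 1] by (simp add: a_def)
  have y_shift: "y powr (1 + t) = b / y"
    using assms(1) by (simp add: b_def powr_add power2_eq_square)
  show ?thesis
    unfolding curv_ratio_def[abs_def] curv_ratio_num_def
    using assms u_pos b_pos
    apply (auto intro!: derivative_eq_intros simp flip: u_def)
    apply (simp only: u_shift y_shift flip: a_def b_def)
    apply (simp add: u_def divide_simps add_pos_pos)
    apply (simp add: algebra_simps power2_eq_square)
    done
qed

lemma curv_ratio_pos:
  "0 < y \<Longrightarrow> 0 < (4 - s) * y + s \<Longrightarrow> 0 < curv_ratio s t y"
  by (simp add: curv_ratio_def)

lemma lin_comb_pos:
  fixes s y :: real
  assumes "0 < y" "0 \<le> s" "s \<le> 4"
  shows "0 < (4 - s) * y + s"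
proof (cases "s = 0")
  case False
  then show ?thesis using assms by (simp add: add_nonneg_pos)
qed (use assms in simp)

lemma curv_ratio_num_nonneg:
  assumes "0 < y" "0 \<le> s" "s \<le> 4" "t \<le> -1" "s + t \<le> 1"
  shows "0 \<le> curv_ratio_num s t y"
proof -
  have "(4 - s)\<^sup>2 - 4 * t - 8 = (s - 2)\<^sup>2 + 4 * (1 - s - t)"
    by (simp add: power2_eq_square algebra_simps)
  then have "0 \<le> (4 - s)\<^sup>2 - 4 * t - 8"
    using assms(5) by (smt (verit) zero_le_power2)
  then have "0 \<le> ((4 - s)\<^sup>2 - 4 * t - 8) * y"
    by (rule mult_nonneg_nonneg) (use assms(1) in simp)
  moreover have "0 \<le> (4 - s) * (- (t + 1)) * y\<^sup>2" "0 \<le> s * (1 - s - t)"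
    using assms by simp_all
  ultimately show ?thesis
    unfolding curv_ratio_num_def by (simp add: algebra_simps)
qed

lemma curv_ratio_num_nonpos:
  assumes "0 < y" "0 \<le> s" "s \<le> 4" "-1 \<le> t" "2 \<le> s + t"
  shows "curv_ratio_num s t y \<le> 0"
proof -
  have "(4 - s)\<^sup>2 - 4 * t - 8 = s * (s - 4) - 4 * (s + t - 2)"
    by (simp add: power2_eq_square algebra_simps)
  moreover have "s * (s - 4) \<le> 0"
    using assms(2,3) by (simp add: mult_nonneg_nonpos)
  ultimately have "(4 - s)\<^sup>2 - 4 * t - 8 \<le> 0"
    using assms(5) by (smt (verit))
  then have "((4 - s)\<^sup>2 - 4 * t - 8) * y \<le> 0"
    using assms(1) by (simp add: mult_nonpos_nonneg)
  moreover have "0 \<le> (4 - s) * (t + 1) * y\<^sup>2" "0 \<le> s * (s + t - 1)"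
    using assms by simp_all
  ultimately show ?thesis
    unfolding curv_ratio_num_def by (simp add: algebra_simps)
qed

lemma curv_ratio_mono:
  assumes "0 < a" "a \<le> b" "0 \<le> s" "s \<le> 4" "t \<le> -1" "s + t \<le> 1"
  shows "curv_ratio s t a \<le> curv_ratio s t b"
proof (rule DERIV_nonneg_imp_nondecreasing[OF assms(2)])
  fix y assume "a \<le> y" "y \<le> b"
  then have y: "0 < y" using assms(1) by simp
  have w: "0 < (4 - s) * y + s" using lin_comb_pos[OF y assms(3,4)] .
  have "0 \<le> curv_ratio s t y * curv_ratio_num s t y / (y * (y + 1) * ((4 - s) * y + s))"
    using curv_ratio_pos[OF y w, where t = t] curv_ratio_num_nonneg[OF y assms(3-6)] y w
    by (intro divide_nonneg_pos mult_nonneg_nonneg mult_pos_pos) auto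
  with curv_ratio_deriv[OF y w]
  show "\<exists>D. (curv_ratio s t has_real_derivative D) (at y) \<and> 0 \<le> D"
    by blast
qed

lemma curv_ratio_antimono:
  assumes "0 < a" "a \<le> b" "0 \<le> s" "s \<le> 4" "-1 \<le> t" "2 \<le> s + t"
  shows "curv_ratio s t b \<le> curv_ratio s t a"
proof (rule DERIV_nonpos_imp_nonincreasing[OF assms(2)])
  fix y assume "a \<le> y" "y \<le> b"
  then have y: "0 < y" using assms(1) by simp
  have w: "0 < (4 - s) * y + s" using lin_comb_pos[OF y assms(3,4)] .
  have "curv_ratio s t y * curv_ratio_num s t y / (y * (y + 1) * ((4 - s) * y + s)) \<le> 0"
    using curv_ratio_pos[OF y w, where t = t] curv_ratio_num_nonpos[OF y assms(3-6)] y w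
    by (intro divide_nonpos_pos mult_nonneg_nonpos mult_pos_pos) auto
  with curv_ratio_deriv[OF y w]
  show "\<exists>D. (curv_ratio s t has_real_derivative D) (at y) \<and> D \<le> 0"
    by blast
qed

lemma Phi_eq_sum_Phi_gen:
  assumes "p \<in> Gamma n" "q \<in> Gamma n"
  shows "Phi n t p q = (\<Sum>i<n. q i * Phi_gen t (p i / q i))"
proof -
  have pos: "0 < p i" "0 < q i" if "i < n" for i
    using assms that by (auto simp: Gamma_def)
  have balance: "(\<Sum>i<n. p i - q i) = 0"
    using assms by (simp add: Gamma_def sum_subtractf)
  consider "t = 0" | "t = 1" | "t \<noteq> 0" "t \<noteq> 1" by blast
  then show ?thesis
  proof cases
    case 1
    have "q i * Phi_gen t (p i / q i) = q i * ln (q i / p i) + (p i - q i)" if "i < n" for i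
      using pos[OF that] 1 by (simp add: Phi_gen_def ln_div algebra_simps)
    then show ?thesis using 1 balance by (simp add: Phi_def sum.distrib)
  next
    case 2
    have "q i * Phi_gen t (p i / q i) = p i * ln (p i / q i) - (p i - q i)" if "i < n" for i
      using pos[OF that] 2 by (simp add: Phi_gen_def algebra_simps)
    then show ?thesis using 2 balance by (simp add: Phi_def sum_subtractf)
  next
    case 3
    have "q i * Phi_gen t (p i / q i)
        = (p i powr t * q i powr (1 - t) - q i - t * (p i - q i)) / (t * (t - 1))" if "i < n" for i
      using pos[OF that] 3 by (simp add: Phi_gen_def powr_divide powr_diff field_simps)
    then have "(\<Sum>i<n. q i * Phi_gen t (p i / q i))
        = ((\<Sum>i<n. p i powr t * q i powr (1 - t)) - (\<Sum>i<n. q i)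
           - t * (\<Sum>i<n. p i - q i)) / (t * (t - 1))"
      by (simp add: sum_divide_distrib[symmetric] sum_subtractf sum_distrib_left
          right_diff_distrib)
    then show ?thesis using 3 assms balance by (simp add: Phi_def Gamma_def)
  qed
qed

lemma zeta_eq_sum_zeta_gen:
  assumes "\<And>i. i < n \<Longrightarrow> 0 < p i \<and> 0 < q i"
  shows "zeta n s q p = (\<Sum>i<n. q i * zeta_gen s (p i / q i))"
proof -
  have "q i * zeta_gen s (p i / q i)
      = (if s = 1 then (q i - p i) * ln ((p i + q i) / (2 * p i))
         else (q i - p i) * ((p i + q i) / (2 * p i)) powr (s - 1) / (s - 1))" if "i < n" for i
  proof -
    have "(p i / q i + 1) / (2 * (p i / q i)) = (p i + q i) / (2 * p i)"
      "q i * (1 - p i / q i) = q i - p i"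
      using assms[OF that] by (simp_all add: field_simps)
    then show ?thesis
      by (simp only: zeta_gen_def if_distrib[of "(*) (q i)"] times_divide_eq_right
          mult.assoc[symmetric])
  qed
  then show ?thesis
    by (simp add: zeta_def sum_divide_distrib)
qed

lemma zeta_Phi_bounds:
  assumes "p \<in> Gamma n" "q \<in> Gamma n" "0 < r"
    and ratio: "\<And>i. i < n \<Longrightarrow> r \<le> p i / q i \<and> p i / q i \<le> R"
    and curv: "\<And>y. r \<le> y \<Longrightarrow> y \<le> R \<Longrightarrow>
      m \<le> curv_ratio s t y \<and> curv_ratio s t y \<le> M"
  shows "m * Phi n t p q \<le> zeta n s q p \<and> zeta n s q p \<le> M * Phi n t p q"
proof -
  have pos: "0 < p i \<and> 0 < q i" if "i < n" for i
    using assms(1,2) that by (auto simp: Gamma_def)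
  then have "q i \<noteq> 0" if "i < n" for i
    using that by fastforce
  then have mean: "(\<Sum>i<n. q i * (p i / q i)) = (\<Sum>i<n. q i)"
    using assms(1,2) by (simp add: Gamma_def)
  have "r * q i \<le> p i \<and> p i \<le> R * q i" if "i < n" for i
    using ratio[OF that] pos[OF that] by (simp add: pos_le_divide_eq pos_divide_le_eq)
  then have "r * (\<Sum>i<n. q i) \<le> (\<Sum>i<n. p i)
      \<and> (\<Sum>i<n. p i) \<le> R * (\<Sum>i<n. q i)"
    by (auto simp: sum_distrib_left intro!: sum_mono)
  then have one: "1 \<in> {r..R}"
    using assms(1,2) by (simp add: Gamma_def)
  have y_pos: "0 < y" if "y \<in> {r..R}" for y
    using assms(3) that by simp
  note derivs = Phi_gen_deriv Phi_gen'_deriv zeta_gen_deriv zeta_gen'_deriv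
  have "(\<Sum>i<n. q i * (m * Phi_gen t (p i / q i)))
      \<le> (\<Sum>i<n. q i * zeta_gen s (p i / q i))"
  proof (rule weighted_sum_mono_second_deriv[where C = "{r..R}"
        and A' = "\<lambda>y. m * Phi_gen' t y" and A'' = "\<lambda>y. m * y powr (t - 2)"])
    show "m * y powr (t - 2) \<le> zeta_gen'' s y" if "y \<in> {r..R}" for y
      using curv that y_pos[OF that]
      by (simp add: zeta_gen''_eq_curv_ratio[where t = t] mult_right_mono)
  qed (use one mean ratio pos y_pos in
        \<open>auto intro!: derivs DERIV_cmult simp: less_imp_le\<close>)
  moreover have "(\<Sum>i<n. q i * zeta_gen s (p i / q i))
      \<le> (\<Sum>i<n. q i * (M * Phi_gen t (p i / q i)))"
  proof (rule weighted_sum_mono_second_deriv[where C = "{r..R}"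
        and B' = "\<lambda>y. M * Phi_gen' t y" and B'' = "\<lambda>y. M * y powr (t - 2)"])
    show "zeta_gen'' s y \<le> M * y powr (t - 2)" if "y \<in> {r..R}" for y
      using curv that y_pos[OF that]
      by (simp add: zeta_gen''_eq_curv_ratio[where t = t] mult_right_mono)
  qed (use one mean ratio pos y_pos in
        \<open>auto intro!: derivs DERIV_cmult simp: less_imp_le\<close>)
  ultimately show ?thesis
    using Phi_eq_sum_Phi_gen[OF assms(1,2)] zeta_eq_sum_zeta_gen[of n p q] pos
    by (simp add: sum_distrib_left mult.left_commute)
qed

theorem theorem4p1:
  fixes n :: nat and p q :: "nat \<Rightarrow> real" and r R s t :: real
  assumes "n \<ge> 2"
    and "p \<in> Gamma n" and "q \<in> Gamma n"
    and "0 < r" and "r \<le> R"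
    and "\<And>i. i < n \<Longrightarrow> r \<le> p i / q i \<and> p i / q i \<le> R"
    and "0 \<le> s" and "s \<le> 4"
  shows "(t \<le> -1 \<and> s + t \<le> 1 \<longrightarrow>
           ((r + 1) / (2 * r)) powr (s - 3) * (((4 - s) * r + s) / (4 * r powr (t + 2))) * Phi n t p q
             \<le> zeta n s q p
         \<and> zeta n s q p
             \<le> ((R + 1) / (2 * R)) powr (s - 3) * (((4 - s) * R + s) / (4 * R powr (t + 2))) * Phi n t p q)
       \<and> (t \<ge> -1 \<and> s + t \<ge> 2 \<longrightarrow>
           ((R + 1) / (2 * R)) powr (s - 3) * (((4 - s) * R + s) / (4 * R powr (t + 2))) * Phi n t p q
             \<le> zeta n s q p
         \<and> zeta n s q p
             \<le> ((r + 1) / (2 * r)) powr (s - 3) * (((4 - s) * r + s) / (4 * r powr (t + 2))) * Phi n t p q)"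
proof -
  note bounds = zeta_Phi_bounds[OF assms(2,3,4,6)]
  have "curv_ratio s t r * Phi n t p q \<le> zeta n s q p
      \<and> zeta n s q p \<le> curv_ratio s t R * Phi n t p q"
    if "t \<le> -1" "s + t \<le> 1"
    by (rule bounds) (use assms(4,7,8) that in \<open>auto intro: curv_ratio_mono\<close>)
  moreover have "curv_ratio s t R * Phi n t p q \<le> zeta n s q p
      \<and> zeta n s q p \<le> curv_ratio s t r * Phi n t p q"
    if "-1 \<le> t" "2 \<le> s + t"
    by (rule bounds) (use assms(4,7,8) that in \<open>auto intro: curv_ratio_antimono\<close>)
  ultimately show ?thesis
    unfolding curv_ratio_def by blast
qed

end
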